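(* Let $q\ge2$, $n\ge1$, $P=3\lceil\log_q n+\log_q\log_q n\rceil+1$, and let $p$ be the smallest prime with $p>4n$. Let $d_1\in[0,2q-2]$, $d_2\in[0,p-1]$, $d_3\in[0,\lfloor\frac{(q-1)(P-1)}{3}\rfloor]$, and let $\mathcal{C}^2_{Aux}$ be the set of $\boldsymbol{x}\in\mathcal{ALL}(n,\frac{P-1}{3})$ such that $\mathrm{VT}^{(0)}(\boldsymbol{x})\equiv d_1\pmod{2q-1}$, $\mathrm{VT}^{(2)}(\boldsymbol{x})\equiv d_2\pmod p$, and $\mathrm{VT}^{(0)}(\mathcal{O}(\boldsymbol{x}))\equiv d_3\pmod{\lfloor\frac{(q-1)(P-1)}{3}\rfloor+1}$. Then for any distinct $\boldsymbol{x},\boldsymbol{y}\in\mathcal{C}^2_{Aux}$ with $d_H(\mathcal{R}(\boldsymbol{x}),\mathcal{R}(\boldsymbol{y}))=4$, there do NOT exist $\boldsymbol{u},\boldsymbol{w}\in\Sigma_q^{\ge0}$, $\boldsymbol{v}\in\Sigma_q^{\ge1}$, integers $t_1,t_2\ge1$ and symbols $a_1,b_1,a_2,b_2\in\Sigma_q$ with $a_1\ne b_1$, $a_2\ne b_2$, such that $\boldsymbol{x}=(\boldsymbol{u},\boldsymbol{\alpha}_{t_1}(a_1b_1),\boldsymbol{v},\boldsymbol{\alpha}_{t_2}(a_2b_2),\boldsymbol{w})$ and $\boldsymbol{y}=(\boldsymbol{u},\boldsymbol{\alpha}_{t_1}(b_1a_1),\boldsymbol{v},\boldsymbol{\alpha}_{t_2}(b_2a_2),\boldsymbol{w})$.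 Moreover, there exists a choice of $d_1,d_2,d_3$ such that $r(\mathcal{C}^2_{Aux})\le\log_qn+\log_q\log_qn+O(1)$ as $n\to\infty$.
   Context: $\Sigma_q=\{0,\dots,q-1\}$; $\Sigma_q^{\ge0}$ (resp. $\Sigma_q^{\ge1}$) is the set of finite (resp. nonempty finite) sequences over $\Sigma_q$; $(\cdot,\cdot)$ is concatenation. For $\boldsymbol{x}\in\Sigma_q^n$, $x[i]$ is its $i$-th entry, with $x[i]=0$ for $i\notin[1,n]$. $\mathrm{VT}^{(k)}(\boldsymbol{z})=\sum_i i^kz[i]$. $\mathcal{O}(\boldsymbol{x})=(x[1],x[3],\dots,x[2\lceil n/2\rceil-1])$ is the odd sequence. For distinct $a,b$, $\boldsymbol{\alpha}_t(ab)$ is the alternating sequence $abab\cdots$ of length $t$; a sequence is alternating if it has such a form. $\mathcal{ALL}(n,L)$ is the set of $\boldsymbol{x}\in\Sigma_q^n$ all of whose alternating substrings (contiguous blocks) have length at most $L$. $\mathcal{R}(\boldsymbol{x})$ is the length-$(n+1)$ vector whose $i$-th entry is the multiset $\{\{x[i-1],x[i]\}\}$; $d_H$ is Hamming distance. Redundancy: $r(\mathcal{C})=n-\log_q|\mathcal{C}|$. *)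

theory Defs
  imports Complex_Main "HOL-Computational_Algebra.Primes" "HOL-Library.Multiset"
begin

definition seqs :: "nat \<Rightarrow> nat list set" where
  "seqs q = {x. set x \<subseteq> {..<q}}"

(* 1-indexed entry x[i], with x[i] = 0 outside [1, length x] *)
definition ent :: "nat list \<Rightarrow> nat \<Rightarrow> nat" where
  "ent x i = (if 1 \<le> i \<and> i \<le> length x then x ! (i - 1) else 0)"

definition VT :: "nat \<Rightarrow> nat list \<Rightarrow> nat" where
  "VT k z = (\<Sum>i = 1..length z. i ^ k * ent z i)"

definition oddseq :: "nat list \<Rightarrow> nat list" where
  "oddseq x = map (\<lambda>j. ent x (2 * j + 1)) [0..<(length x + 1) div 2]"

definition alt :: "nat \<Rightarrow> nat \<Rightarrow> nat \<Rightarrow> nat list" where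
  "alt t a b = map (\<lambda>i. if even i then a else b) [0..<t]"

definition is_alt :: "nat list \<Rightarrow> bool" where
  "is_alt s \<longleftrightarrow> (\<exists>a b. a \<noteq> b \<and> s = alt (length s) a b)"

definition ALLs :: "nat \<Rightarrow> nat \<Rightarrow> int \<Rightarrow> nat list set" where
  "ALLs q n L = {x \<in> seqs q. length x = n \<and>
     (\<forall>i l. 1 \<le> l \<and> i + l \<le> n \<and> is_alt (take l (drop i x)) \<longrightarrow> int l \<le> L)}"

definition Rvec :: "nat list \<Rightarrow> nat multiset list" where
  "Rvec x = map (\<lambda>i. {# ent x (i - 1), ent x i #}) [1..<length x + 2]"

definition hamming :: "'a list \<Rightarrow> 'a list \<Rightarrow> nat" where
  "hamming s t = card {i. i < length s \<and> i < length t \<and> s ! i \<noteq> t ! i}"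

definition Pq :: "nat \<Rightarrow> nat \<Rightarrow> int" where
  "Pq q n = 3 * \<lceil>log q (real n) + log q (log q (real n))\<rceil> + 1"

definition pn :: "nat \<Rightarrow> nat" where
  "pn n = (LEAST p. prime p \<and> p > 4 * n)"

definition M3 :: "nat \<Rightarrow> nat \<Rightarrow> nat" where
  "M3 q n = nat \<lfloor>real (q - 1) * real_of_int (Pq q n - 1) / 3\<rfloor>"

definition CAux :: "nat \<Rightarrow> nat \<Rightarrow> nat \<Rightarrow> nat \<Rightarrow> nat \<Rightarrow> nat list set" where
  "CAux q n d1 d2 d3 = {x \<in> ALLs q n ((Pq q n - 1) div 3).
     VT 0 x mod (2 * q - 1) = d1 mod (2 * q - 1) \<and>
     VT 2 x mod pn n = d2 mod pn n \<and>
     VT 0 (oddseq x) mod (M3 q n + 1) = d3 mod (M3 q n + 1)}"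

definition redundancy :: "nat \<Rightarrow> nat \<Rightarrow> nat list set \<Rightarrow> real" where
  "redundancy q n C = real n - log q (real (card C))"

end

theory Submission
  imports Defs "HOL-Real_Asymp.Real_Asymp" "HOL-Library.FuncSet"
begin

(* Every checksum defining CAux is linear, so VT(x) - VT(y) is (a1 - b1) resp. (a2 - b2)
   times an alternating sum of positional weights over the first resp. second factor. Modulo 2q-1
   the weight-0 checksum forces t1 and t2 to have the same parity, and a2 - b2 = b1 - a1 if both
   are odd. Since both factors have length at most L = (P-1)/3, the odd-position checksum modulo
   (q-1)L+1 holds over the integers and ties the two factors together; what is left of the
   weight-2 checksum is then a product of three nonzero integers of absolute value below the
   prime p > 4n, which p cannot divide.

   For the redundancy, at most n q^(n-L+1) sequences contain an alternating factor longer than L,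
   at most half of all q^n once q^L >= 2qn. Pigeonholing the others over the (2q-1) p ((q-1)L+1)
   residue classes gives a code of the required size, because p <= 16n for large n by Erdos'
   proof of Bertrand's postulate, run on the central binomial coefficient C(16k, 8k). *)

section \<open>A prime between 4k and 16k\<close>

lemma card_prime_power_divisors:
  fixes p N B :: nat
  assumes p: "prime p" and N: "0 < N" "N \<le> B"
  shows "card {i \<in> {1..B}. p ^ i dvd N} = multiplicity p N"
proof -
  have "multiplicity p N < 2 ^ multiplicity p N" by (rule less_exp)
  also have "\<dots> \<le> p ^ multiplicity p N" using prime_ge_2_nat[OF p] by (simp add: power_mono)
  also have "\<dots> \<le> N" using N by (simp add: dvd_imp_le multiplicity_dvd)
  finally have le: "multiplicity p N \<le> B" using N by simp
  have iff: "p ^ i dvd N \<longleftrightarrow> i \<le> multiplicity p N" for i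
    using p N by (intro power_dvd_iff_le_multiplicity) (auto simp: prime_gt_1_nat)
  have "{i \<in> {1..B}. p ^ i dvd N} = {1..multiplicity p N}"
  proof (rule set_eqI)
    fix i
    show "i \<in> {i \<in> {1..B}. p ^ i dvd N} \<longleftrightarrow> i \<in> {1..multiplicity p N}"
      using le iff[of i] by auto
  qed
  thus ?thesis by simp
qed

lemma multiplicity_fact:
  fixes p N B :: nat
  assumes p: "prime p" and "N \<le> B"
  shows "multiplicity p (fact N) = (\<Sum>i=1..B. N div p ^ i)"
  using \<open>N \<le> B\<close>
proof (induction N)
  case 0
  then show ?case by simp
next
  case (Suc N)
  have "(\<Sum>i=1..B. Suc N div p ^ i) = (\<Sum>i=1..B. N div p ^ i + (if p ^ i dvd Suc N then 1 else 0))"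
    by (rule sum.cong) (auto simp: div_Suc dvd_eq_mod_eq_0)
  also have "\<dots> = multiplicity p (fact N) + card {i \<in> {1..B}. p ^ i dvd Suc N}"
    using Suc by (simp add: sum.distrib sum.If_cases Int_def)
  also have "\<dots> = multiplicity p (fact N) + multiplicity p (Suc N)"
    using card_prime_power_divisors[OF p, of "Suc N" B] Suc.prems by simp
  also have "\<dots> = multiplicity p (fact (Suc N))"
  proof -
    have "fact (Suc N) = Suc N * (fact N :: nat)" by simp
    thus ?thesis using prime_elem_multiplicity_mult_distrib[of p "Suc N" "fact N"] p by simp
  qed
  finally show ?case by (rule sym)
qed

lemma multiplicity_central_binomial:
  fixes p n :: nat
  assumes p: "prime p"
  shows "multiplicity p ((2*n) choose n) + 2 * (\<Sum>i=1..2*n. n div p ^ i) = (\<Sum>i=1..2*n. 2*n div p ^ i)"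
proof -
  have "fact n * fact n * ((2*n) choose n) = (fact (2*n) :: nat)"
    using binomial_fact_lemma[of n "2*n"] by simp
  moreover have "multiplicity p (fact n * fact n * ((2*n) choose n))
      = multiplicity p (fact n * fact n :: nat) + multiplicity p ((2*n) choose n)"
    using p by (intro prime_elem_multiplicity_mult_distrib) auto
  ultimately have "multiplicity p (fact (2*n) :: nat)
      = multiplicity p (fact n * fact n :: nat) + multiplicity p ((2*n) choose n)"
    by simp
  also have "multiplicity p (fact n * fact n :: nat) = 2 * multiplicity p (fact n :: nat)"
    using p by (simp add: prime_elem_multiplicity_mult_distrib)
  finally show ?thesis
    using multiplicity_fact[OF p, of "2*n" "2*n"] multiplicity_fact[OF p, of n "2*n"] by simp
qed

lemma prime_power_multiplicity_central_binomial_le: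
  fixes p n :: nat
  assumes p: "prime p" and n: "n \<ge> 1"
  shows "p ^ multiplicity p ((2*n) choose n) \<le> 2*n"
proof (rule ccontr)
  define v where "v = multiplicity p ((2*n) choose n)"
  assume "\<not> ?thesis"
  hence big: "2*n < p ^ v" unfolding v_def by simp
  have "2*n div p ^ i \<le> 2 * (n div p ^ i) + (if i < v then 1 else 0)" for i
  proof (cases "i < v")
    case True
    have "2*n div d \<le> 2 * (n div d) + 1" if "d > 0" for d :: nat
    proof -
      have "2*n = d * (2 * (n div d)) + 2 * (n mod d)"
        by (metis add_mult_distrib2 div_mult_mod_eq mult.commute mult.left_commute)
      moreover have "2 * (n mod d) < 2 * d" using that by simp
      ultimately have "2*n < d * (2 * (n div d) + 2)" by (simp add: algebra_simps)
      hence "2*n div d < 2 * (n div d) + 2"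
        using less_mult_imp_div_less[of "2*n" "2 * (n div d) + 2" d] by (simp add: mult.commute)
      thus ?thesis by simp
    qed
    thus ?thesis using True p by (simp add: prime_gt_0_nat)
  next
    case False
    have "p ^ v \<le> p ^ i" using False prime_gt_0_nat[OF p] by (intro power_increasing) auto
    thus ?thesis using big by simp
  qed
  hence "(\<Sum>i=1..2*n. 2*n div p ^ i) \<le> (\<Sum>i=1..2*n. 2 * (n div p ^ i) + (if i < v then 1 else 0))"
    by (intro sum_mono)
  also have "\<dots> = 2 * (\<Sum>i=1..2*n. n div p ^ i) + card {i \<in> {1..2*n}. i < v}"
    by (simp add: sum.distrib sum.If_cases sum_distrib_left Int_def)
  also have "card {i \<in> {1..2*n}. i < v} \<le> card {1..<v}" by (rule card_mono) auto
  finally have "v \<le> v - 1"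
    using multiplicity_central_binomial[OF p, of n] unfolding v_def by simp
  moreover have "v \<noteq> 0" using big n by (intro notI) simp
  ultimately show False by simp
qed

lemma prime_power_multiplicity_central_binomial_le_self:
  fixes p n :: nat
  assumes p: "prime p" and n: "n \<ge> 1" and large: "2*n < p\<^sup>2"
  shows "p ^ multiplicity p ((2*n) choose n) \<le> p"
proof -
  have "multiplicity p ((2*n) choose n) < 2"
  proof (rule ccontr)
    assume "\<not> ?thesis"
    hence "p\<^sup>2 \<le> p ^ multiplicity p ((2*n) choose n)"
      using prime_gt_0_nat[OF p] by (intro power_increasing) auto
    thus False using prime_power_multiplicity_central_binomial_le[OF p n] large by linarith
  qed
  hence "p ^ multiplicity p ((2*n) choose n) \<le> p ^ 1"
    using prime_gt_0_nat[OF p] by (intro power_increasing) auto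
  thus ?thesis by simp
qed

definition primorial :: "nat \<Rightarrow> nat" where
  "primorial x = \<Prod>{p. prime p \<and> p \<le> x}"

lemma finite_primes_le: "finite {p::nat. prime p \<and> p \<le> x}"
  by (rule finite_subset[of _ "{..x}"]) auto

lemma prod_primes_dvd:
  fixes N :: nat
  assumes "finite S" "\<And>p. p \<in> S \<Longrightarrow> prime p \<and> p dvd N"
  shows "\<Prod>S dvd N"
  using assms
proof (induction S rule: finite_induct)
  case empty
  then show ?case by simp
next
  case (insert p S)
  have "coprime p (\<Prod>S)"
  proof (rule prod_coprime_right)
    fix i assume "i \<in> S"
    thus "coprime p i" using insert primes_coprime[of p i] by auto
  qed
  moreover have "p dvd N" "\<Prod>S dvd N" using insert by auto
  ultimately have "p * \<Prod>S dvd N" by (intro divides_mult)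
  thus ?case using insert by simp
qed

lemma central_binomial_odd_le: "(2*m+1) choose m \<le> 4 ^ m"
proof -
  have "((2*m+1) choose m) + ((2*m+1) choose (m+1)) = (\<Sum>k\<in>{m, m+1}. (2*m+1) choose k)"
    by simp
  also have "\<dots> \<le> (\<Sum>k\<le>2*m+1. (2*m+1) choose k)" by (rule sum_mono2) auto
  also have "\<dots> = 2 ^ (2*m+1)" by (rule choose_row_sum)
  finally have "2 * ((2*m+1) choose m) \<le> 2 * 4 ^ m"
    using binomial_symmetric[of "m+1" "2*m+1"] by (simp add: power_mult power_add)
  thus ?thesis by simp
qed

lemma prime_dvd_central_binomial_odd:
  fixes m p :: nat
  assumes p: "prime p" "m + 1 < p" "p \<le> 2*m+1"
  shows "p dvd ((2*m+1) choose m)"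
proof -
  have "fact m * fact (m+1) * ((2*m+1) choose m) = (fact (2*m+1) :: nat)"
    using binomial_fact_lemma[of m "2*m+1"] by (simp add: algebra_simps)
  moreover have "p dvd (fact (2*m+1) :: nat)" using p prime_dvd_fact_iff[of p "2*m+1"] by simp
  moreover have "\<not> p dvd (fact m :: nat)" "\<not> p dvd (fact (m+1) :: nat)"
    using p prime_dvd_fact_iff[of p m] prime_dvd_fact_iff[of p "m+1"] by simp_all
  ultimately show ?thesis using p(1) by (metis prime_dvd_mult_iff)
qed

lemma primorial_even:
  assumes "even x" "x \<noteq> 2"
  shows "primorial x = primorial (x - 1)"
proof -
  have "\<not> prime x" using assms prime_odd_nat[of x] prime_gt_1_nat[of x] by auto
  hence "prime p \<and> p \<le> x \<longleftrightarrow> prime p \<and> p \<le> x - 1" for p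
    by (cases "p = x") auto
  thus ?thesis unfolding primorial_def by simp
qed

lemma primorial_odd_le: "primorial (2*m+1) \<le> primorial (m+1) * 4 ^ m"
proof -
  let ?B = "{p. prime p \<and> m+1 < p \<and> p \<le> 2*m+1}"
  have fin: "finite ?B" by (rule finite_subset[of _ "{..2*m+1}"]) auto
  have split: "{p. prime p \<and> p \<le> 2*m+1} = {p. prime p \<and> p \<le> m+1} \<union> ?B" by auto
  have eq: "primorial (2*m+1) = primorial (m+1) * \<Prod>?B"
    unfolding primorial_def split by (rule prod.union_disjoint[OF finite_primes_le fin]) auto
  have "\<Prod>?B \<le> (2*m+1) choose m"
  proof (rule dvd_imp_le)
    show "\<Prod>?B dvd (2*m+1) choose m"
      by (rule prod_primes_dvd[OF fin]) (use prime_dvd_central_binomial_odd[of _ m] in auto)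
  qed simp
  also have "\<dots> \<le> 4 ^ m" by (rule central_binomial_odd_le)
  finally show ?thesis unfolding eq by (rule mult_left_mono) simp
qed

lemma primorial_le_four_power: "primorial x \<le> 4 ^ x"
proof (induction x rule: less_induct)
  case (less x)
  show ?case
  proof (cases "x \<le> 1")
    case True
    hence none: "{p. prime p \<and> p \<le> x} = {}" by (auto dest: prime_ge_2_nat)
    show ?thesis unfolding primorial_def none by simp
  next
    case False
    show ?thesis
    proof (cases "even x")
      case even: True
      show ?thesis
      proof (cases "x = 2")
        case True
        hence two: "{p. prime p \<and> p \<le> x} = {2}" by (auto intro: antisym prime_ge_2_nat)
        show ?thesis unfolding primorial_def two using True by simp
      next
        case False
        have "primorial x = primorial (x - 1)" using even False by (rule primorial_even)
        also have "\<dots> \<le> 4 ^ (x - 1)" using \<open>\<not> x \<le> 1\<close> by (intro less.IH) simp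
        also have "\<dots> \<le> 4 ^ x" by (rule power_increasing) simp_all
        finally show ?thesis .
      qed
    next
      case odd: False
      then obtain m where x: "x = 2*m+1" by (rule oddE)
      have "primorial x \<le> primorial (m+1) * 4 ^ m" unfolding x by (rule primorial_odd_le)
      also have "\<dots> \<le> 4 ^ (m+1) * 4 ^ m" using \<open>\<not> x \<le> 1\<close> x by (intro mult_right_mono less.IH) simp_all
      also have "\<dots> = 4 ^ x" by (simp add: x power_add mult_2)
      finally show ?thesis .
    qed
  qed
qed

lemma central_binomial_le_if_prime_divisors_le:
  fixes n m s :: nat
  assumes n: "n \<ge> 1" and s: "2*n < (s+1)\<^sup>2"
    and small: "\<And>p. prime p \<Longrightarrow> p dvd ((2*n) choose n) \<Longrightarrow> p \<le> m"
  shows "(2*n) choose n \<le> (2*n) ^ (s+1) * 4 ^ m"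
proof -
  let ?C = "(2*n) choose n"
  let ?P = "prime_factors ?C"
  let ?g = "\<lambda>p. p ^ multiplicity p ?C"
  have "?C = (\<Prod>p\<in>?P. ?g p)" using prime_factorization_nat[of ?C] by simp
  also have "\<dots> = (\<Prod>p\<in>?P \<inter> {..s}. ?g p) * (\<Prod>p\<in>?P - {..s}. ?g p)"
    by (rule prod.Int_Diff) simp
  also have "(\<Prod>p\<in>?P \<inter> {..s}. ?g p) \<le> (\<Prod>p\<in>?P \<inter> {..s}. 2*n)"
    by (rule prod_mono) (auto simp: prime_power_multiplicity_central_binomial_le[OF _ n] in_prime_factors_iff)
  also have "\<dots> = (2*n) ^ card (?P \<inter> {..s})" by simp
  also have "\<dots> \<le> (2*n) ^ (s+1)"
  proof (rule power_increasing)
    have "card (?P \<inter> {..s}) \<le> card {..s}" by (rule card_mono) auto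
    thus "card (?P \<inter> {..s}) \<le> s + 1" by simp
  qed (use n in simp)
  also have "(\<Prod>p\<in>?P - {..s}. ?g p) \<le> (\<Prod>p\<in>?P - {..s}. p)"
  proof (rule prod_mono)
    fix p assume p: "p \<in> ?P - {..s}"
    hence "prime p" by (simp add: in_prime_factors_iff)
    moreover have "(s+1)\<^sup>2 \<le> p\<^sup>2" using p by (intro power_mono) auto
    hence "2*n < p\<^sup>2" using s by linarith
    ultimately have "?g p \<le> p" by (rule prime_power_multiplicity_central_binomial_le_self[OF _ n])
    thus "0 \<le> ?g p \<and> ?g p \<le> p" by simp
  qed
  also have "\<dots> \<le> primorial m"
  proof (rule dvd_imp_le)
    have "?P - {..s} \<subseteq> {p. prime p \<and> p \<le> m}" using small by (auto simp: in_prime_factors_iff)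
    thus "(\<Prod>p\<in>?P - {..s}. p) dvd primorial m"
      unfolding primorial_def by (rule prod_dvd_prod_subset[OF finite_primes_le])
    show "0 < primorial m" unfolding primorial_def by (rule prod_pos) (simp add: prime_gt_0_nat)
  qed
  also have "\<dots> \<le> 4 ^ m" by (rule primorial_le_four_power)
  finally show ?thesis by simp
qed

lemma four_power_le_if_no_prime_between:
  fixes k :: nat
  assumes k: "k \<ge> 1" and no_prime: "\<not> (\<exists>p. prime p \<and> 4*k < p \<and> p \<le> 16*k)"
  shows "(4::real) ^ (4*k) \<le> (16 * real k) ^ (nat \<lfloor>sqrt (16 * real k)\<rfloor> + 2)"
proof -
  define n where "n = 8*k"
  define s where "s = nat \<lfloor>sqrt (real (2*n))\<rfloor>"
  have n: "n \<ge> 1" using k n_def by simp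
  have "real (2*n) = (sqrt (real (2*n)))\<^sup>2" by simp
  also have "\<dots> < (real s + 1)\<^sup>2"
    unfolding s_def by (intro power_strict_mono) (linarith, simp_all)
  also have "\<dots> = real ((s+1)\<^sup>2)" by simp
  finally have s2: "2*n < (s+1)\<^sup>2" by (simp only: of_nat_less_iff)
  have "p \<le> 4*k" if "prime p" "p dvd ((2*n) choose n)" for p
  proof -
    have "p ^ 1 \<le> p ^ multiplicity p ((2*n) choose n)"
      using that prime_gt_1_nat[OF that(1)]
      by (intro power_increasing) (auto simp: power_dvd_iff_le_multiplicity[symmetric])
    hence "p \<le> 16*k" using prime_power_multiplicity_central_binomial_le[OF that(1) n] n_def by simp
    thus ?thesis using no_prime that(1) by (meson not_le)
  qed
  hence "(2*n) choose n \<le> (2*n) ^ (s+1) * 4 ^ (4*k)"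
    by (intro central_binomial_le_if_prime_divisors_le[OF n s2]) auto
  hence "real ((2*n) choose n) \<le> real ((2*n) ^ (s+1) * 4 ^ (4*k))" by (simp only: of_nat_le_iff)
  hence "real ((2*n) choose n) \<le> (2 * real n) ^ (s+1) * 4 ^ (4*k)" by simp
  moreover have "4 ^ n / (2 * real n) \<le> real ((2*n) choose n)"
    using n by (intro central_binomial_lower_bound) simp
  ultimately have "4 ^ n / (2 * real n) \<le> (2 * real n) ^ (s+1) * 4 ^ (4*k)" by linarith
  hence "(4::real) ^ n \<le> (2 * real n) * ((2 * real n) ^ (s+1) * 4 ^ (4*k))"
    using n by (simp add: divide_le_eq mult.commute)
  hence "(4::real) ^ n \<le> (2 * real n) ^ (s+2) * 4 ^ (4*k)" by simp
  moreover have "(4::real) ^ n = 4 ^ (4*k) * 4 ^ (4*k)" by (simp add: n_def flip: power_add)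
  ultimately have "(4::real) ^ (4*k) \<le> (2 * real n) ^ (s+2)" by simp
  moreover have "2 * real n = 16 * real k" "real (2*n) = 16 * real k" by (simp_all add: n_def)
  ultimately show ?thesis unfolding s_def by simp
qed

lemma eventually_prime_between:
  "eventually (\<lambda>k::nat. \<exists>p. prime p \<and> 4*k < p \<and> p \<le> 16*k) sequentially"
proof -
  have "eventually (\<lambda>x::real. (16*x) powr (sqrt (16*x) + 2) < 4 powr (4*x)) at_top"
    by real_asymp
  hence "eventually (\<lambda>k::nat. (16 * real k) powr (sqrt (16 * real k) + 2) < 4 powr (4 * real k)) sequentially"
    by (rule eventually_compose_filterlim[OF _ filterlim_real_sequentially])
  moreover have "eventually (\<lambda>k::nat. 1 \<le> k) sequentially" by (rule eventually_ge_at_top)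
  ultimately have "eventually (\<lambda>k::nat. (16 * real k) powr (sqrt (16 * real k) + 2) < 4 powr (4 * real k) \<and> 1 \<le> k) sequentially"
    by (rule eventually_conj)
  thus ?thesis
  proof (rule eventually_mono)
    fix k :: nat
    assume k: "(16 * real k) powr (sqrt (16 * real k) + 2) < 4 powr (4 * real k) \<and> 1 \<le> k"
    show "\<exists>p. prime p \<and> 4*k < p \<and> p \<le> 16*k"
    proof (rule ccontr)
      let ?s = "nat \<lfloor>sqrt (16 * real k)\<rfloor>"
      assume "\<not> ?thesis"
      hence "(4::real) ^ (4*k) \<le> (16 * real k) ^ (?s + 2)"
        using k by (intro four_power_le_if_no_prime_between) auto
      also have "\<dots> = (16 * real k) powr real (?s + 2)"
        by (rule powr_realpow[symmetric]) (use k in simp)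
      also have "\<dots> \<le> (16 * real k) powr (sqrt (16 * real k) + 2)"
      proof (rule powr_mono)
        have "real ?s \<le> sqrt (16 * real k)" by simp
        thus "real (?s + 2) \<le> sqrt (16 * real k) + 2" by simp
      qed (use k in simp)
      also have "\<dots> < 4 powr (4 * real k)" using k by simp
      also have "\<dots> = 4 ^ (4*k)" by (simp add: powr_realpow[symmetric])
      finally show False by simp
    qed
  qed
qed

lemma prime_pn: "prime (pn n)" and pn_gt: "4 * n < pn n"
proof -
  have "prime (pn n) \<and> 4 * n < pn n"
    unfolding pn_def by (rule LeastI_ex) (use bigger_prime in blast)
  thus "prime (pn n)" "4 * n < pn n" by auto
qed

lemma eventually_pn_le: "eventually (\<lambda>n. pn n \<le> 16 * n) sequentially"
proof (rule eventually_mono[OF eventually_prime_between])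
  fix n :: nat
  assume "\<exists>p. prime p \<and> 4*n < p \<and> p \<le> 16*n"
  then obtain p where p: "prime p" "4*n < p" "p \<le> 16*n" by blast
  have "pn n \<le> p" unfolding pn_def by (rule Least_le) (use p in simp)
  thus "pn n \<le> 16 * n" using p by simp
qed

section \<open>Checksums of alternating factors\<close>

(* The contribution of a factor z occupying positions s+1, ..., s+|z| of a longer sequence. *)
definition VT_from :: "nat \<Rightarrow> nat \<Rightarrow> nat list \<Rightarrow> int" where
  "VT_from k s z = (\<Sum>i<length z. int ((s+i+1)^k * z!i))"

lemma VT_from_Nil [simp]: "VT_from k s [] = 0"
  by (simp add: VT_from_def)

lemma VT_from_Cons [simp]: "VT_from k s (c # z) = int ((s+1)^k * c) + VT_from k (Suc s) z"
  unfolding VT_from_def length_Cons sum.lessThan_Suc_shift by simp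

lemma VT_from_append: "VT_from k s (z @ z') = VT_from k s z + VT_from k (s + length z) z'"
  by (induction z arbitrary: s) simp_all

lemma VT_eq_VT_from: "int (VT k z) = VT_from k 0 z"
proof -
  have "VT k z = (\<Sum>i<length z. (Suc i)^k * ent z (Suc i))"
    unfolding VT_def using sum.atLeast1_atMost_eq[of "\<lambda>i. i^k * ent z i" "length z"] by simp
  also have "\<dots> = (\<Sum>i<length z. (Suc i)^k * z ! i)"
    by (rule sum.cong) (auto simp: ent_def)
  finally show ?thesis unfolding VT_from_def by simp
qed

definition odd_pos_sum :: "nat \<Rightarrow> nat list \<Rightarrow> int" where
  "odd_pos_sum s z = (\<Sum>i<length z. if even (s+i) then int (z!i) else 0)"

lemma odd_pos_sum_Nil [simp]: "odd_pos_sum s [] = 0"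
  by (simp add: odd_pos_sum_def)

lemma odd_pos_sum_Cons [simp]:
  "odd_pos_sum s (c # z) = (if even s then int c else 0) + odd_pos_sum (Suc s) z"
  unfolding odd_pos_sum_def length_Cons sum.lessThan_Suc_shift by (auto intro!: sum.cong)

lemma odd_pos_sum_append: "odd_pos_sum s (z @ z') = odd_pos_sum s z + odd_pos_sum (s + length z) z'"
  by (induction z arbitrary: s) simp_all

lemma VT_oddseq_eq_odd_pos_sum: "int (VT 0 (oddseq x)) = odd_pos_sum 0 x"
proof -
  let ?m = "(length x + 1) div 2"
  have "VT 0 (oddseq x) = (\<Sum>i<length (oddseq x). ent (oddseq x) (Suc i))"
    unfolding VT_def using sum.atLeast1_atMost_eq[of "\<lambda>i. i^0 * ent (oddseq x) i" "length (oddseq x)"]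
    by simp
  also have "\<dots> = (\<Sum>j<?m. x ! (2*j))"
  proof (rule sum.cong)
    show "{..<length (oddseq x)} = {..<?m}" by (simp add: oddseq_def)
    fix j assume "j \<in> {..<?m}"
    thus "ent (oddseq x) (Suc j) = x ! (2*j)" by (simp add: ent_def oddseq_def)
  qed
  finally have VT_eq: "int (VT 0 (oddseq x)) = (\<Sum>j<?m. int (x ! (2*j)))" by simp
  have "odd_pos_sum 0 x = (\<Sum>i\<in>{..<length x} \<inter> {i. even i}. int (x ! i))"
    unfolding odd_pos_sum_def by (simp add: sum.If_cases)
  also have "{..<length x} \<inter> {i. even i} = (\<lambda>j. 2*j) ` {..<?m}"
  proof (rule set_eqI)
    fix i
    show "i \<in> {..<length x} \<inter> {i. even i} \<longleftrightarrow> i \<in> (\<lambda>j. 2*j) ` {..<?m}"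
    proof
      assume "i \<in> {..<length x} \<inter> {i. even i}"
      hence "i = 2 * (i div 2)" "i div 2 < ?m" by auto
      thus "i \<in> (\<lambda>j. 2*j) ` {..<?m}" by blast
    qed auto
  qed
  also have "(\<Sum>i\<in>(\<lambda>j. 2*j) ` {..<?m}. int (x ! i)) = (\<Sum>j<?m. int (x ! (2*j)))"
    by (rule sum.reindex_cong[where l="\<lambda>j. 2*j"]) (auto simp: inj_on_def)
  finally show ?thesis unfolding VT_eq by (rule sym)
qed

lemma alt_0 [simp]: "alt 0 a b = []"
  by (simp add: alt_def)

lemma alt_Suc: "alt (Suc t) a b = a # alt t b a"
proof -
  have "[0..<Suc t] = 0 # map Suc [0..<t]" by (simp add: map_Suc_upt upt_conv_Cons)
  thus ?thesis unfolding alt_def by simp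
qed

lemma length_alt [simp]: "length (alt t a b) = t"
  by (simp add: alt_def)

lemma nth_alt: "j < t \<Longrightarrow> alt t a b ! j = (if even j then a else b)"
  by (simp add: alt_def)

lemma take_alt: "take k (alt t a b) = alt (min k t) a b"
  by (simp add: alt_def take_map min_def)

lemma is_alt_alt: "a \<noteq> b \<Longrightarrow> is_alt (alt t a b)"
  unfolding is_alt_def by auto

definition alt_moment :: "nat \<Rightarrow> nat \<Rightarrow> nat \<Rightarrow> int" where
  "alt_moment k s t = (\<Sum>j<t. (-1)^j * int ((s+j+1)^k))"

definition alt_odd_count :: "nat \<Rightarrow> nat \<Rightarrow> int" where
  "alt_odd_count s t = (\<Sum>j<t. if even (s+j) then (-1)^j else 0)"

lemma alt_moment_Suc: "alt_moment k s (Suc t) = int ((s+1)^k) - alt_moment k (Suc s) t"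
  unfolding alt_moment_def sum.lessThan_Suc_shift by (simp add: sum_negf[symmetric])

lemma alt_odd_count_Suc:
  "alt_odd_count s (Suc t) = (if even s then 1 else 0) - alt_odd_count (Suc s) t"
  unfolding alt_odd_count_def sum.lessThan_Suc_shift by (auto simp: sum_negf[symmetric] intro!: sum.cong)

lemma VT_from_alt_swap:
  "VT_from k s (alt t a b) - VT_from k s (alt t b a) = (int a - int b) * alt_moment k s t"
proof (induction t arbitrary: s a b)
  case 0
  then show ?case by (simp add: alt_moment_def)
next
  case (Suc t)
  then show ?case using Suc.IH[of "Suc s" b a] by (simp add: alt_Suc alt_moment_Suc algebra_simps)
qed

lemma odd_pos_sum_alt_swap:
  "odd_pos_sum s (alt t a b) - odd_pos_sum s (alt t b a) = (int a - int b) * alt_odd_count s t"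
proof (induction t arbitrary: s a b)
  case 0
  then show ?case by (simp add: alt_odd_count_def)
next
  case (Suc t)
  then show ?case using Suc.IH[of "Suc s" b a] by (simp add: alt_Suc alt_odd_count_Suc algebra_simps)
qed

lemma VT_diff_two_alt_swaps:
  assumes "x = u @ alt t1 a1 b1 @ v @ alt t2 a2 b2 @ w"
    and "y = u @ alt t1 b1 a1 @ v @ alt t2 b2 a2 @ w"
  shows "int (VT k x) - int (VT k y) = (int a1 - int b1) * alt_moment k (length u) t1
           + (int a2 - int b2) * alt_moment k (length u + t1 + length v) t2"
proof -
  have "int (VT k x) - int (VT k y)
      = (VT_from k (length u) (alt t1 a1 b1) - VT_from k (length u) (alt t1 b1 a1))
        + (VT_from k (length u + t1 + length v) (alt t2 a2 b2)
           - VT_from k (length u + t1 + length v) (alt t2 b2 a2))"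
    unfolding VT_eq_VT_from assms by (simp add: VT_from_append algebra_simps)
  thus ?thesis by (simp only: VT_from_alt_swap)
qed

lemma VT_oddseq_diff_two_alt_swaps:
  assumes "x = u @ alt t1 a1 b1 @ v @ alt t2 a2 b2 @ w"
    and "y = u @ alt t1 b1 a1 @ v @ alt t2 b2 a2 @ w"
  shows "int (VT 0 (oddseq x)) - int (VT 0 (oddseq y)) = (int a1 - int b1) * alt_odd_count (length u) t1
           + (int a2 - int b2) * alt_odd_count (length u + t1 + length v) t2"
proof -
  have "int (VT 0 (oddseq x)) - int (VT 0 (oddseq y))
      = (odd_pos_sum (length u) (alt t1 a1 b1) - odd_pos_sum (length u) (alt t1 b1 a1))
        + (odd_pos_sum (length u + t1 + length v) (alt t2 a2 b2)
           - odd_pos_sum (length u + t1 + length v) (alt t2 b2 a2))"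
    unfolding VT_oddseq_eq_odd_pos_sum assms by (simp add: odd_pos_sum_append algebra_simps)
  thus ?thesis by (simp only: odd_pos_sum_alt_swap)
qed

lemma alt_moment_0: "alt_moment 0 s t = (if even t then 0 else 1)"
  by (induction t arbitrary: s) (simp_all add: alt_moment_def alt_moment_Suc)

lemma alt_moment_2_even: "alt_moment 2 s (2*m) = - int m * (2 * int s + 2 * int m + 1)"
proof (induction m arbitrary: s)
  case 0
  then show ?case by (simp add: alt_moment_def)
next
  case (Suc m)
  have "alt_moment 2 s (2 * Suc m) = int ((s+1)\<^sup>2) - int ((s+2)\<^sup>2) + alt_moment 2 (Suc (Suc s)) (2*m)"
    by (simp add: alt_moment_Suc)
  then show ?case using Suc.IH[of "Suc (Suc s)"] by (simp add: algebra_simps power2_eq_square)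
qed

lemma alt_moment_2_odd:
  "alt_moment 2 s (2*m+1) = int ((s+1)\<^sup>2) + int m * (2 * int s + 2 * int m + 3)"
  using alt_moment_2_even[of "Suc s" m] by (simp add: alt_moment_Suc algebra_simps)

lemma alt_odd_count_even: "alt_odd_count s (2*m) = (-1)^s * int m"
proof (induction m arbitrary: s)
  case 0
  then show ?case by (simp add: alt_odd_count_def)
next
  case (Suc m)
  have "alt_odd_count s (2 * Suc m)
      = (if even s then 1 else 0) - (if even (Suc s) then 1 else 0) + alt_odd_count (Suc (Suc s)) (2*m)"
    by (simp add: alt_odd_count_Suc)
  also have "\<dots> = (-1)^s * int (Suc m)"
    using Suc.IH[of "Suc (Suc s)"] by (cases "even s") (simp_all add: algebra_simps)
  finally show ?case .
qed

lemma alt_odd_count_odd: "alt_odd_count s (2*m+1) = (if even s then int m + 1 else - int m)"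
  using alt_odd_count_even[of "Suc s" m] by (simp add: alt_odd_count_Suc)

section \<open>The number-theoretic contradiction\<close>

lemma dvd_abs_less_imp_zero:
  fixes M x :: int
  assumes "M dvd x" "\<bar>x\<bar> < M"
  shows "x = 0"
proof (rule ccontr)
  assume "x \<noteq> 0"
  hence "\<bar>M\<bar> \<le> \<bar>x\<bar>" using assms(1) by (rule dvd_imp_le_int)
  thus False using assms(2) by simp
qed

lemma prime_not_dvd_mult3:
  fixes p :: nat and a b c :: int
  assumes p: "prime p" and nz: "a \<noteq> 0" "b \<noteq> 0" "c \<noteq> 0"
    and small: "\<bar>a\<bar> < int p" "\<bar>b\<bar> < int p" "\<bar>c\<bar> < int p"
  shows "\<not> int p dvd a * b * c"
proof -
  have "\<not> int p dvd z" if "z \<noteq> 0" "\<bar>z\<bar> < int p" for z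
    using that dvd_abs_less_imp_zero[of "int p" z] by auto
  thus ?thesis using p nz small by (simp add: prime_dvd_mult_iff)
qed

lemma even_alt_swaps_impossible:
  fixes d1 d2 c M :: int and s r m1 m2 n p :: nat
  assumes d: "d1 \<noteq> 0" "\<bar>d1\<bar> \<le> c" "\<bar>d2\<bar> \<le> c" "c < int p"
    and m: "1 \<le> m1" "s + 2*m1 < r" "r + 2*m2 \<le> n"
    and p: "prime p" "4*n < p"
    and M: "c * int (m1 + m2) < M"
    and odd_cond: "M dvd d1 * alt_odd_count s (2*m1) + d2 * alt_odd_count r (2*m2)"
    and sq_cond: "int p dvd d1 * alt_moment 2 s (2*m1) + d2 * alt_moment 2 r (2*m2)"
  shows False
proof -
  define \<epsilon> :: int where "\<epsilon> = (-1)^(s+r)"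
  have sign: "\<bar>(-1::int)^j\<bar> = 1" "(-1::int)^j * (-1)^j = 1" for j
    by (simp_all flip: power_add)
  let ?X = "d1 * ((-1)^s * int m1) + d2 * ((-1)^r * int m2)"
  have "\<bar>d1 * ((-1)^s * int m1)\<bar> \<le> c * int m1" "\<bar>d2 * ((-1)^r * int m2)\<bar> \<le> c * int m2"
    using d by (simp_all add: abs_mult sign mult_right_mono)
  hence "\<bar>?X\<bar> < M" using M abs_triangle_ineq[of "d1 * ((-1)^s * int m1)" "d2 * ((-1)^r * int m2)"]
    by (simp add: distrib_left)
  moreover have "M dvd ?X" using odd_cond unfolding alt_odd_count_even .
  ultimately have "?X = 0" using dvd_abs_less_imp_zero by blast
  hence "0 = (-1)^r * ?X" by simp
  also have "\<dots> = \<epsilon> * d1 * int m1 + ((-1)^r * (-1)^r) * d2 * int m2"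
    unfolding \<epsilon>_def power_add by (simp add: algebra_simps)
  finally have rel: "d2 * int m2 = - (\<epsilon> * d1 * int m1)" using sign(2)[of r] by simp
  define B where "B = (2 * int s + 2 * int m1 + 1) - \<epsilon> * (2 * int r + 2 * int m2 + 1)"
  have "d1 * alt_moment 2 s (2*m1) + d2 * alt_moment 2 r (2*m2)
      = - (d1 * int m1) * (2 * int s + 2 * int m1 + 1) - (d2 * int m2) * (2 * int r + 2 * int m2 + 1)"
    unfolding alt_moment_2_even by (simp add: algebra_simps)
  also have "\<dots> = - (d1 * int m1 * B)" unfolding rel B_def by (simp add: algebra_simps)
  finally have "int p dvd d1 * int m1 * B" using sq_cond by simp
  moreover have "B \<noteq> 0 \<and> \<bar>B\<bar> < int p"
  proof (cases "even (s + r)")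
    case True
    hence "B = 2 * int s + 2 * int m1 - 2 * int r - 2 * int m2" by (simp add: B_def \<epsilon>_def)
    thus ?thesis using m p by auto
  next
    case False
    hence "B = 2 * int s + 2 * int m1 + 2 * int r + 2 * int m2 + 2" by (simp add: B_def \<epsilon>_def)
    thus ?thesis using m p by auto
  qed
  ultimately show False
    using prime_not_dvd_mult3[OF p(1), of d1 "int m1" B] d m p by auto
qed

lemma odd_alt_swaps_impossible:
  fixes d c M :: int and s r m1 m2 n p :: nat
  assumes d: "d \<noteq> 0" "\<bar>d\<bar> \<le> c" "c < int p"
    and m: "s + 2*m1 + 1 < r" "r + 2*m2 + 1 \<le> n"
    and p: "prime p" "4*n < p"
    and M: "c * int (m1 + m2 + 1) < M"
    and odd_cond: "M dvd d * (alt_odd_count s (2*m1+1) - alt_odd_count r (2*m2+1))"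
    and sq_cond: "int p dvd d * (alt_moment 2 s (2*m1+1) - alt_moment 2 r (2*m2+1))"
  shows False
proof -
  let ?e = "alt_odd_count s (2*m1+1) - alt_odd_count r (2*m2+1)"
  have "\<bar>?e\<bar> \<le> int (m1 + m2 + 1)" unfolding alt_odd_count_odd by auto
  hence "\<bar>d * ?e\<bar> \<le> c * int (m1 + m2 + 1)"
    unfolding abs_mult using d by (intro mult_mono) auto
  hence "d * ?e = 0" using M odd_cond by (intro dvd_abs_less_imp_zero[of M]) simp_all
  hence "?e = 0" using d by simp
  hence same: "even s = even r" "m1 = m2" unfolding alt_odd_count_odd by (auto split: if_splits)
  have eq: "d * (alt_moment 2 s (2*m1+1) - alt_moment 2 r (2*m2+1))
      = d * (int s - int r) * (int s + int r + 2 * int m1 + 2)"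
    unfolding alt_moment_2_odd same(2) by (simp add: algebra_simps power2_eq_square)
  have "int p dvd d * (int s - int r) * (int s + int r + 2 * int m1 + 2)"
    using sq_cond unfolding eq .
  moreover have "\<not> int p dvd d * (int s - int r) * (int s + int r + 2 * int m1 + 2)"
    by (rule prime_not_dvd_mult3[OF p(1)]) (use d m p in auto)
  ultimately show False by contradiction
qed

lemma alt_swaps_weight0_parity:
  fixes d1 d2 :: int
  assumes d: "d1 \<noteq> 0" "\<bar>d1\<bar> \<le> int q - 1" "d2 \<noteq> 0" "\<bar>d2\<bar> \<le> int q - 1"
    and VT0_cond: "int (2*q-1) dvd d1 * alt_moment 0 s t1 + d2 * alt_moment 0 r t2"
  shows "even t1 \<longleftrightarrow> even t2" and "odd t1 \<Longrightarrow> d2 = - d1"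
proof -
  have "q \<ge> 1" using d by linarith
  hence "int (2*q-1) = 2 * int q - 1" by (simp add: of_nat_diff)
  hence small: "\<bar>d1\<bar> < int (2*q-1)" "\<bar>d2\<bar> < int (2*q-1)" "\<bar>d1 + d2\<bar> < int (2*q-1)"
    using d by linarith+
  show parity: "even t1 \<longleftrightarrow> even t2"
  proof (rule ccontr)
    assume "\<not> ?thesis"
    hence "int (2*q-1) dvd d1 \<or> int (2*q-1) dvd d2" using VT0_cond by (auto simp: alt_moment_0)
    thus False using d small dvd_abs_less_imp_zero by blast
  qed
  show "d2 = - d1" if "odd t1"
  proof -
    have "int (2*q-1) dvd d1 + d2" using VT0_cond that parity by (simp add: alt_moment_0)
    hence "d1 + d2 = 0" using small(3) by (rule dvd_abs_less_imp_zero)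
    thus ?thesis by simp
  qed
qed

lemma two_alt_swaps_impossible:
  fixes q L s r t1 t2 n p :: nat and d1 d2 :: int
  assumes d: "d1 \<noteq> 0" "\<bar>d1\<bar> \<le> int q - 1" "d2 \<noteq> 0" "\<bar>d2\<bar> \<le> int q - 1"
    and t: "1 \<le> t1" "t1 \<le> L" "1 \<le> t2" "t2 \<le> L" "s + t1 < r" "r + t2 \<le> n"
    and p: "prime p" "4*n < p" and qn: "q \<le> n"
    and VT0_cond: "int (2*q-1) dvd d1 * alt_moment 0 s t1 + d2 * alt_moment 0 r t2"
    and odd_cond: "int ((q-1)*L+1) dvd d1 * alt_odd_count s t1 + d2 * alt_odd_count r t2"
    and VT2_cond: "int p dvd d1 * alt_moment 2 s t1 + d2 * alt_moment 2 r t2"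
  shows False
proof -
  have "q \<ge> 1" using d by linarith
  hence M: "int ((q-1)*L+1) = (int q - 1) * int L + 1" by (simp add: of_nat_diff)
  have bound: "(int q - 1) * int m < int ((q-1)*L+1)" if "m \<le> L" for m
  proof -
    have "(int q - 1) * int m \<le> (int q - 1) * int L"
      using that \<open>q \<ge> 1\<close> by (intro mult_left_mono) simp_all
    thus ?thesis unfolding M by linarith
  qed
  have c: "int q - 1 < int p" using qn p by linarith
  note parity = alt_swaps_weight0_parity[OF d VT0_cond]
  show False
  proof (cases "even t1")
    case True
    then obtain m1 m2 where m: "t1 = 2*m1" "t2 = 2*m2" using parity(1) by (auto elim!: evenE)
    moreover have "(int q - 1) * int (m1 + m2) < int ((q-1)*L+1)" using t m by (intro bound) simp
    ultimately show False
      using even_alt_swaps_impossible[OF d(1,2,4) c _ _ _ p] odd_cond VT2_cond t by auto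
  next
    case False
    then obtain m1 m2 where m: "t1 = 2*m1+1" "t2 = 2*m2+1" using parity(1) by (auto elim!: oddE)
    have d2: "d2 = - d1" using parity(2) False by simp
    have "(int q - 1) * int (m1 + m2 + 1) < int ((q-1)*L+1)" using t m by (intro bound) simp
    moreover have "int ((q-1)*L+1) dvd d1 * (alt_odd_count s (2*m1+1) - alt_odd_count r (2*m2+1))"
      using odd_cond unfolding m d2 by (simp add: algebra_simps)
    moreover have "int p dvd d1 * (alt_moment 2 s (2*m1+1) - alt_moment 2 r (2*m2+1))"
      using VT2_cond unfolding m d2 by (simp add: algebra_simps)
    ultimately show False using odd_alt_swaps_impossible[OF d(1,2) c _ _ p] t m by simp
  qed
qed

definition run_bound :: "nat \<Rightarrow> nat \<Rightarrow> int" where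
  "run_bound q n = \<lceil>log q (real n) + log q (log q (real n))\<rceil>"

lemma Pq_minus_one_div_three: "(Pq q n - 1) div 3 = run_bound q n"
  unfolding Pq_def run_bound_def by simp

lemma M3_eq:
  assumes "0 \<le> run_bound q n"
  shows "M3 q n = (q - 1) * nat (run_bound q n)"
proof -
  have "real (q - 1) * real_of_int (Pq q n - 1) / 3 = real_of_int (int (q - 1) * run_bound q n)"
    unfolding Pq_def run_bound_def by simp
  hence "M3 q n = nat (int (q - 1) * run_bound q n)" unfolding M3_def by (simp only: floor_of_int)
  thus ?thesis using assms by (simp add: nat_mult_distrib)
qed

lemma le_of_two_le_run_bound:
  assumes q: "q \<ge> 2" and n: "1 \<le> n" and L: "2 \<le> run_bound q n"
  shows "q \<le> n"
proof (rule ccontr)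
  assume "\<not> q \<le> n"
  have "log q (real n) + log q (log q (real n)) < 1"
  proof (cases "n = 1")
    case True
    thus ?thesis by (simp add: log_def)
  next
    case False
    have "0 < log q (real n)" "log q (real n) < 1" using q n False \<open>\<not> q \<le> n\<close> by simp_all
    hence "log q (log q (real n)) < 0" using q by simp
    thus ?thesis using \<open>log q (real n) < 1\<close> by linarith
  qed
  hence "run_bound q n \<le> 1" unfolding run_bound_def by (simp add: ceiling_le_iff)
  thus False using L by simp
qed

lemma int_dvd_diff_if_mod_eq: "a mod m = b mod m \<Longrightarrow> int m dvd int a - int b"
  by (metis of_nat_mod mod_eq_dvd_iff)

lemma alt_factor_length_le:
  assumes x: "u @ alt t a b @ w \<in> ALLs q n L" and ab: "a \<noteq> b" and t: "1 \<le> t"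
  shows "int t \<le> L"
proof -
  have "is_alt (take t (drop (length u) (u @ alt t a b @ w)))" using is_alt_alt[OF ab] by simp
  moreover have "length u + t \<le> n" using x unfolding ALLs_def by simp
  ultimately show ?thesis using x t unfolding ALLs_def by blast
qed

lemma two_le_ALLs_bound:
  assumes x: "u @ c # d # w \<in> ALLs q n L" and cd: "c \<noteq> d"
  shows "2 \<le> L"
proof -
  have "u @ alt 2 c d @ w \<in> ALLs q n L" using x by (simp add: numeral_2_eq_2 alt_Suc)
  from alt_factor_length_le[OF this cd] show ?thesis by simp
qed

lemma CAux_dvd_checksum_diffs:
  assumes xC: "x \<in> CAux q n d1 d2 d3" and yC: "y \<in> CAux q n d1 d2 d3"
  shows "int (2*q-1) dvd int (VT 0 x) - int (VT 0 y)"
    and "int (pn n) dvd int (VT 2 x) - int (VT 2 y)"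
    and "int (M3 q n + 1) dvd int (VT 0 (oddseq x)) - int (VT 0 (oddseq y))"
  by (rule int_dvd_diff_if_mod_eq, use xC yC in \<open>simp add: CAux_def\<close>)+

lemma two_le_ALLs_bound_of_swap:
  assumes x: "u @ alt t a b @ c # w \<in> ALLs q n L" and y: "u @ alt t b a @ c # w' \<in> ALLs q n L"
    and t: "1 \<le> t" and ab: "a \<noteq> b"
  shows "2 \<le> L"
proof (cases "t \<ge> 2")
  case True
  then obtain t' where "t = Suc (Suc t')" by (metis add_2_eq_Suc le_Suc_ex)
  hence "u @ alt t a b @ c # w = u @ a # b # (alt t' a b @ c # w)" by (simp add: alt_Suc)
  from two_le_ALLs_bound[OF x[unfolded this] ab] show ?thesis .
next
  case False
  hence "t = Suc 0" using t by simp
  hence x': "u @ a # c # w \<in> ALLs q n L" and y': "u @ b # c # w' \<in> ALLs q n L"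
    using x y by (simp_all add: alt_Suc)
  show ?thesis
  proof (cases "a = c")
    case True
    hence "b \<noteq> c" using ab by simp
    from two_le_ALLs_bound[OF y' this] show ?thesis .
  next
    case False
    from two_le_ALLs_bound[OF x' False] show ?thesis .
  qed
qed

lemma no_two_alt_swaps_in_CAux:
  assumes xC: "x \<in> CAux q n d1 d2 d3" and yC: "y \<in> CAux q n d1 d2 d3"
    and v: "v \<noteq> []" and t: "t1 \<ge> 1" "t2 \<ge> 1"
    and ab: "a1 < q" "b1 < q" "a2 < q" "b2 < q" "a1 \<noteq> b1" "a2 \<noteq> b2"
    and x: "x = u @ alt t1 a1 b1 @ v @ alt t2 a2 b2 @ w"
    and y: "y = u @ alt t1 b1 a1 @ v @ alt t2 b2 a2 @ w"
  shows False
proof -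
  define L where "L = run_bound q n"
  define s where "s = length u"
  define r where "r = length u + t1 + length v"
  have xA: "x \<in> ALLs q n L" and yA: "y \<in> ALLs q n L"
    using xC yC unfolding CAux_def L_def Pq_minus_one_div_three by auto
  have n_eq: "n = s + t1 + length v + t2 + length w"
    using xA x unfolding ALLs_def s_def by simp
  have t1_le: "int t1 \<le> L" using alt_factor_length_le[OF xA[unfolded x] ab(5) t(1)] .
  have "(u @ alt t1 a1 b1 @ v) @ alt t2 a2 b2 @ w \<in> ALLs q n L" using xA unfolding x by simp
  hence t2_le: "int t2 \<le> L" using ab(6) t(2) by (rule alt_factor_length_le)
  obtain c v' where v': "v = c # v'" using v by (cases v) auto
  have "u @ alt t1 a1 b1 @ c # (v' @ alt t2 a2 b2 @ w) \<in> ALLs q n L"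
    "u @ alt t1 b1 a1 @ c # (v' @ alt t2 b2 a2 @ w) \<in> ALLs q n L"
    using xA yA unfolding x y v' by simp_all
  hence "2 \<le> L" using t(1) ab(5) by (rule two_le_ALLs_bound_of_swap)
  have "q \<ge> 2" using ab(1,2,5) by linarith
  moreover have "n \<ge> 1" using n_eq t(1) by linarith
  ultimately have "q \<le> n" using \<open>2 \<le> L\<close> unfolding L_def by (rule le_of_two_le_run_bound)
  have M3: "M3 q n = (q - 1) * nat L" using M3_eq[of q n] \<open>2 \<le> L\<close> unfolding L_def by simp
  note VT0 = CAux_dvd_checksum_diffs(1)[OF xC yC]
    and VT2 = CAux_dvd_checksum_diffs(2)[OF xC yC]
    and odd = CAux_dvd_checksum_diffs(3)[OF xC yC]
  show False
  proof (rule two_alt_swaps_impossible[of "int a1 - int b1" q "int a2 - int b2" t1 "nat L" t2 s r n "pn n"])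
    show "int a1 - int b1 \<noteq> 0" "\<bar>int a1 - int b1\<bar> \<le> int q - 1"
      "int a2 - int b2 \<noteq> 0" "\<bar>int a2 - int b2\<bar> \<le> int q - 1"
      using ab by auto
    show "1 \<le> t1" "t1 \<le> nat L" "1 \<le> t2" "t2 \<le> nat L" using t t1_le t2_le by auto
    show "s + t1 < r" "r + t2 \<le> n" using v n_eq unfolding r_def s_def by auto
    show "prime (pn n)" "4 * n < pn n" by (rule prime_pn, rule pn_gt)
    show "q \<le> n" by fact
    show "int (2*q-1) dvd (int a1 - int b1) * alt_moment 0 s t1 + (int a2 - int b2) * alt_moment 0 r t2"
      using VT0 unfolding VT_diff_two_alt_swaps[OF x y] s_def r_def .
    show "int ((q-1) * nat L + 1) dvd
        (int a1 - int b1) * alt_odd_count s t1 + (int a2 - int b2) * alt_odd_count r t2"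
      using odd unfolding VT_oddseq_diff_two_alt_swaps[OF x y] M3 s_def r_def .
    show "int (pn n) dvd (int a1 - int b1) * alt_moment 2 s t1 + (int a2 - int b2) * alt_moment 2 r t2"
      using VT2 unfolding VT_diff_two_alt_swaps[OF x y] s_def r_def .
  qed
qed

section \<open>Counting sequences without long alternating factors\<close>

definition words :: "nat \<Rightarrow> nat \<Rightarrow> nat list set" where
  "words q k = {xs. set xs \<subseteq> {..<q} \<and> length xs = k}"

lemma finite_words: "finite (words q k)"
  unfolding words_def by (rule finite_lists_length_eq) simp

lemma card_words: "card (words q k) = q ^ k"
  unfolding words_def using card_lists_length_eq[of "{..<q}" k] by simp

lemma ALLs_subset_words: "ALLs q n L \<subseteq> words q n"
  unfolding ALLs_def words_def seqs_def by auto

lemma is_alt_eq_alt_nth: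
  assumes "is_alt z" "2 \<le> length z"
  shows "z = alt (length z) (z ! 0) (z ! 1)"
proof -
  obtain a b where ab: "z = alt (length z) a b" using assms(1) unfolding is_alt_def by blast
  have l: "0 < length z" "1 < length z" using assms(2) by linarith+
  have a: "alt (length z) a b ! 0 = a" using nth_alt[OF l(1), of a b] by simp
  have b: "alt (length z) a b ! 1 = b" using nth_alt[OF l(2), of a b] by simp
  have "z ! 0 = a" using a ab by simp
  moreover have "z ! 1 = b" using b ab by simp
  ultimately show ?thesis using ab by simp
qed

definition alt_window :: "nat \<Rightarrow> nat \<Rightarrow> nat \<Rightarrow> nat \<Rightarrow> nat list set" where
  "alt_window q n l i = {x \<in> words q n. is_alt (take l (drop i x))}"

lemma alt_window_eq_append:
  assumes x: "x \<in> alt_window q n l i" and l: "2 \<le> l" "i + l \<le> n"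
  shows "x = take i x @ alt l (x ! i) (x ! (i+1)) @ drop (i+l) x"
proof -
  have len: "length x = n" using x unfolding alt_window_def words_def by simp
  have "x = take i x @ take l (drop i x) @ drop (i+l) x"
    by (metis append_take_drop_id drop_drop add.commute)
  also have "take l (drop i x) = alt l (x ! i) (x ! (i+1))"
    using is_alt_eq_alt_nth[of "take l (drop i x)"] x l len by (simp add: alt_window_def)
  finally show ?thesis .
qed

lemma card_alt_window_le:
  assumes l: "2 \<le> l" "i + l \<le> n"
  shows "card (alt_window q n l i) \<le> q ^ (n - l + 2)"
proof -
  define f where "f x = (take i x, x ! i, x ! (i+1), drop (i+l) x)" for x :: "nat list"
  let ?B = "words q i \<times> {..<q} \<times> {..<q} \<times> words q (n - (i+l))"
  have "inj_on f (alt_window q n l i)"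
  proof (rule inj_onI)
    fix x x' assume x: "x \<in> alt_window q n l i" and x': "x' \<in> alt_window q n l i" and "f x = f x'"
    hence eqs: "take i x = take i x'" "x ! i = x' ! i" "x ! (i+1) = x' ! (i+1)"
      "drop (i+l) x = drop (i+l) x'" unfolding f_def by simp_all
    have "x = take i x @ alt l (x ! i) (x ! (i+1)) @ drop (i+l) x"
      by (rule alt_window_eq_append[OF x l])
    also have "\<dots> = take i x' @ alt l (x' ! i) (x' ! (i+1)) @ drop (i+l) x'" by (simp only: eqs)
    also have "\<dots> = x'" by (rule alt_window_eq_append[OF x' l, symmetric])
    finally show "x = x'" .
  qed
  moreover have "f ` alt_window q n l i \<subseteq> ?B"
  proof
    fix y assume "y \<in> f ` alt_window q n l i"
    then obtain x where x: "x \<in> alt_window q n l i" and y: "y = f x" by auto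
    have len: "length x = n" and sx: "set x \<subseteq> {..<q}"
      using x unfolding alt_window_def words_def by auto
    have "x ! i < q" "x ! (i+1) < q"
      using subsetD[OF sx nth_mem[of i x]] subsetD[OF sx nth_mem[of "i+1" x]] len l by auto
    moreover have "set (take i x) \<subseteq> {..<q}" "set (drop (i+l) x) \<subseteq> {..<q}"
      using sx set_take_subset set_drop_subset by fast+
    ultimately show "y \<in> ?B" unfolding y f_def words_def using sx len l by auto
  qed
  ultimately have "card (alt_window q n l i) \<le> card ?B"
    by (intro card_inj_on_le) (simp_all add: finite_words)
  also have "card ?B = q ^ i * (q * (q * q ^ (n - (i+l))))"
    by (simp add: card_cartesian_product card_words)
  also have "\<dots> = q ^ (i + 2 + (n - (i+l)))" by (simp add: power_add)
  also have "i + 2 + (n - (i+l)) = n - l + 2" using l by simp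
  finally show ?thesis .
qed

lemma words_diff_ALLs_subset:
  "words q n - ALLs q n (int L) \<subseteq> (\<Union>i \<in> {i. i + (L+1) \<le> n}. alt_window q n (L+1) i)"
proof
  fix x assume bad: "x \<in> words q n - ALLs q n (int L)"
  hence x: "x \<in> words q n" by simp
  have "\<not> (\<forall>i l. 1 \<le> l \<and> i + l \<le> n \<and> is_alt (take l (drop i x)) \<longrightarrow> int l \<le> int L)"
    using bad unfolding ALLs_def words_def seqs_def by auto
  then obtain i l where il: "i + l \<le> n" "is_alt (take l (drop i x))" "L < l" by auto
  have "length (take l (drop i x)) = l" using x il unfolding words_def by simp
  then obtain a b where ab: "a \<noteq> b" "take l (drop i x) = alt l a b"
    using il(2) unfolding is_alt_def by metis
  have "take (L+1) (drop i x) = take (L+1) (take l (drop i x))" using il by (simp add: min_def)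
  also have "\<dots> = alt (L+1) a b" using ab il by (simp add: take_alt min_def)
  finally have "is_alt (take (L+1) (drop i x))" using is_alt_alt[OF ab(1)] by simp
  moreover have "i + (L+1) \<le> n" using il by simp
  ultimately show "x \<in> (\<Union>i \<in> {i. i + (L+1) \<le> n}. alt_window q n (L+1) i)"
    using x unfolding alt_window_def by blast
qed

lemma card_words_diff_ALLs_le:
  assumes L: "L \<ge> 1"
  shows "card (words q n - ALLs q n (int L)) * q ^ (L - 1) \<le> n * q ^ n"
proof -
  let ?I = "{i. i + (L+1) \<le> n}"
  show ?thesis
  proof (cases "?I = {}")
    case True
    hence empty: "words q n - ALLs q n (int L) = {}" using words_diff_ALLs_subset[of q n L] by auto
    show ?thesis unfolding empty by simp
  next
    case False
    hence n: "L + 1 \<le> n" by auto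
    have "?I \<subseteq> {..<n}" using L by auto
    hence I: "finite ?I" "card ?I \<le> n" using finite_subset card_mono[of "{..<n}" ?I] by auto
    have "card (words q n - ALLs q n (int L)) \<le> card (\<Union>i \<in> ?I. alt_window q n (L+1) i)"
      by (rule card_mono[OF _ words_diff_ALLs_subset])
        (use I in \<open>auto simp: alt_window_def intro: finite_subset[OF _ finite_words]\<close>)
    also have "\<dots> \<le> (\<Sum>i \<in> ?I. card (alt_window q n (L+1) i))" by (rule card_UN_le[OF I(1)])
    also have "\<dots> \<le> card ?I * q ^ (n - (L+1) + 2)"
      using sum_bounded_above[of ?I "\<lambda>i. card (alt_window q n (L+1) i)"] card_alt_window_le L by simp
    also have "\<dots> \<le> n * q ^ (n - (L+1) + 2)" using I(2) by (rule mult_right_mono) simp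
    finally have "card (words q n - ALLs q n (int L)) * q ^ (L - 1) \<le> n * (q ^ (n - (L+1) + 2) * q ^ (L - 1))"
      by (simp add: mult_right_mono mult.assoc)
    also have "q ^ (n - (L+1) + 2) * q ^ (L - 1) = q ^ n"
    proof -
      have "n - (L+1) + 2 + (L - 1) = n" using L n by simp
      thus ?thesis by (metis power_add)
    qed
    finally show ?thesis .
  qed
qed

lemma card_ALLs_ge:
  assumes L: "L \<ge> 1" and qn: "0 < q" "0 < n" "2 * q * n \<le> q ^ L"
  shows "q ^ n \<le> 2 * card (ALLs q n (int L))"
proof -
  let ?bad = "words q n - ALLs q n (int L)"
  have "card ?bad * (2 * q * n) \<le> card ?bad * q ^ L" using qn by simp
  also have "\<dots> = q * (card ?bad * q ^ (L - 1))" using L by (cases L) simp_all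
  also have "\<dots> \<le> q * (n * q ^ n)" using card_words_diff_ALLs_le[OF L] by simp
  finally have "(2 * card ?bad) * (q * n) \<le> q ^ n * (q * n)" by (simp add: algebra_simps)
  hence "2 * card ?bad \<le> q ^ n" using qn by simp
  moreover have "card ?bad = q ^ n - card (ALLs q n (int L))"
    using card_Diff_subset[OF finite_subset[OF ALLs_subset_words finite_words] ALLs_subset_words]
    by (simp add: card_words)
  moreover have "card (ALLs q n (int L)) \<le> q ^ n"
    using card_mono[OF finite_words ALLs_subset_words] by (simp add: card_words)
  ultimately show ?thesis by linarith
qed

section \<open>The redundancy of the code\<close>

lemma exists_large_CAux:
  assumes q: "q \<ge> 1"
  shows "\<exists>d1 d2 d3. d1 \<le> 2*q - 2 \<and> d2 \<le> pn n - 1 \<and> d3 \<le> M3 q n \<and>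
           card (ALLs q n ((Pq q n - 1) div 3))
             \<le> card (CAux q n d1 d2 d3) * ((2*q - 1) * pn n * (M3 q n + 1))"
proof -
  let ?A = "ALLs q n ((Pq q n - 1) div 3)"
  let ?D = "{..2*q - 2} \<times> {..pn n - 1} \<times> {..M3 q n}"
  define f where "f x = (VT 0 x mod (2*q - 1), VT 2 x mod pn n, VT 0 (oddseq x) mod (M3 q n + 1))"
    for x
  have pn: "0 < pn n" using prime_gt_0_nat[OF prime_pn] .
  have "f x \<in> ?D" for x
  proof -
    have "VT 0 x mod (2*q - 1) < 2*q - 1" "VT 2 x mod pn n < pn n"
      "VT 0 (oddseq x) mod (M3 q n + 1) < M3 q n + 1"
      using q pn by simp_all
    thus ?thesis unfolding f_def by auto
  qed
  hence "f \<in> ?A \<rightarrow> ?D" by auto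
  moreover have "finite ?A" using finite_subset[OF ALLs_subset_words finite_words] .
  ultimately obtain d where d: "d \<in> ?D" and large: "card (f -` {d} \<inter> ?A) * card ?D \<ge> card ?A"
    using pigeonhole_card[of f ?A ?D] by auto
  obtain d1 d2 d3 where d_eq: "d = (d1, d2, d3)" by (cases d) auto
  have range: "d1 \<le> 2*q - 2" "d2 \<le> pn n - 1" "d3 \<le> M3 q n" using d unfolding d_eq by simp_all
  have "f -` {d} \<inter> ?A = CAux q n d1 d2 d3"
    using d q pn unfolding d_eq CAux_def f_def by auto
  hence "card ?A \<le> card (CAux q n d1 d2 d3) * card ?D" using large by simp
  also have "card ?D = (2*q - 1) * pn n * (M3 q n + 1)"
  proof -
    have "card ?D = Suc (2*q - 2) * (Suc (pn n - 1) * Suc (M3 q n))"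
      by (simp only: card_cartesian_product card_atMost)
    moreover have "Suc (2*q - 2) = 2*q - 1" "Suc (pn n - 1) = pn n" using q pn by simp_all
    ultimately show ?thesis by (simp only: mult.assoc Suc_eq_plus1)
  qed
  finally show ?thesis using range by blast
qed

lemma redundancy_le_log:
  fixes q n :: nat and c :: real
  assumes q: "q \<ge> 2" and C: "real q ^ n \<le> c * real (card C)"
  shows "redundancy q n C \<le> log q c"
proof -
  have "0 < real q ^ n" using q by simp
  hence pos: "0 < c * real (card C)" using C by linarith
  have card: "0 < real (card C)"
  proof (rule ccontr)
    assume "\<not> ?thesis"
    thus False using pos by simp
  qed
  have c: "0 < c" by (rule zero_less_mult_pos2[OF pos card])
  have "real n = log q (real q ^ n)" using q by (simp add: log_nat_power)
  also have "\<dots> \<le> log q (c * real (card C))"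
    using q by (intro log_le_cancel_iff[THEN iffD2] C pos \<open>0 < real q ^ n\<close>) simp
  also have "\<dots> = log q c + log q (real (card C))" using c card by (simp add: log_mult)
  finally show ?thesis unfolding redundancy_def by simp
qed

lemma log_ge_of_pow_le:
  fixes q k n :: nat
  assumes q: "q \<ge> 2" and n: "q ^ k \<le> n"
  shows "real k \<le> log q (real n)"
proof -
  have "0 < q ^ k" using q by simp
  hence "0 < n" using n by linarith
  have "real q ^ k \<le> real n" using n by (metis of_nat_le_iff of_nat_power)
  hence "log q (real q ^ k) \<le> log q (real n)" using q \<open>0 < n\<close> by (subst log_le_cancel_iff) auto
  thus ?thesis using q by (simp add: log_nat_power)
qed

lemma run_bound_estimates:
  fixes q n :: nat
  assumes q: "q \<ge> 2" and n: "q ^ (2*q) \<le> n"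
  shows "1 \<le> run_bound q n" and "2 * q * n \<le> q ^ nat (run_bound q n)"
    and "real (M3 q n + 1) \<le> 3 * q * log q (real n)"
proof -
  define lg where "lg = log q (real n)"
  have q1: "1 < real q" using q by simp
  have "0 < q ^ (2*q)" using q by simp
  hence "0 < n" using n by linarith
  hence n_pos: "0 < real n" by simp
  have "real (2*q) \<le> lg" unfolding lg_def by (rule log_ge_of_pow_le[OF q n])
  hence lg: "2 * real q \<le> lg" "1 \<le> lg" using q by simp_all
  have "n < 2 ^ n" by (rule less_exp)
  also have "(2::nat) ^ n \<le> q ^ n" using q by (rule power_mono) simp
  finally have "real n \<le> real q ^ n" by (metis less_imp_le of_nat_le_iff of_nat_power)
  hence "lg \<le> log q (real q ^ n)" unfolding lg_def using q1 n_pos by (subst log_le_cancel_iff) auto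
  hence "lg \<le> real n" using q1 by (simp add: log_nat_power)
  hence loglg: "0 \<le> log q lg" "log q lg \<le> lg"
    using q1 lg n_pos unfolding lg_def by (simp_all add: log_le_cancel_iff)
  have R: "lg + log q lg \<le> real_of_int (run_bound q n)" "real_of_int (run_bound q n) < lg + log q lg + 1"
    unfolding run_bound_def lg_def by linarith+
  hence "1 \<le> real_of_int (run_bound q n)" using lg loglg by linarith
  thus R1: "1 \<le> run_bound q n" by simp
  define L where "L = nat (run_bound q n)"
  have L: "real L = real_of_int (run_bound q n)" "1 \<le> L" using R1 unfolding L_def by simp_all
  have "real (2 * q * n) = real n * (2 * real q)" by simp
  also have "\<dots> \<le> real n * lg" using lg n_pos by (intro mult_left_mono) auto
  also have "\<dots> = real q powr lg * real q powr (log q lg)"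
    using q1 n_pos lg by (simp add: lg_def)
  also have "\<dots> = real q powr (lg + log q lg)" by (simp add: powr_add)
  also have "\<dots> \<le> real q powr real L" using R L q1 by (intro powr_mono) auto
  also have "\<dots> = real (q ^ L)" using q1 by (simp add: powr_realpow)
  finally show "2 * q * n \<le> q ^ nat (run_bound q n)" unfolding L_def by (simp only: of_nat_le_iff)
  have "M3 q n = (q - 1) * L" using M3_eq[of q n] R1 unfolding L_def by simp
  hence "M3 q n + 1 \<le> (q - 1) * L + L" using L by simp
  also have "\<dots> = q * L" using q by (cases q) simp_all
  finally have "real (M3 q n + 1) \<le> real q * real L" by (metis of_nat_le_iff of_nat_mult)
  also have "\<dots> \<le> real q * (3 * lg)" using R L lg loglg by (intro mult_left_mono) linarith+
  finally show "real (M3 q n + 1) \<le> 3 * q * log q (real n)" unfolding lg_def by simp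
qed

lemma card_ALLs_run_bound_ge:
  fixes q n :: nat
  assumes q: "q \<ge> 2" and n: "q ^ (2*q) \<le> n"
  shows "q ^ n \<le> 2 * card (ALLs q n ((Pq q n - 1) div 3))"
proof -
  note est = run_bound_estimates[OF q n]
  have "0 < q ^ (2*q)" using q by simp
  hence "0 < n" using n by linarith
  hence "q ^ n \<le> 2 * card (ALLs q n (int (nat (run_bound q n))))"
    using est q by (intro card_ALLs_ge) auto
  also have "int (nat (run_bound q n)) = (Pq q n - 1) div 3"
    using est(1) unfolding Pq_minus_one_div_three by simp
  finally show ?thesis .
qed

lemma log_residue_count_le:
  fixes q n :: nat
  assumes q: "q \<ge> 2" and n: "q ^ (2*q) \<le> n" and pn: "pn n \<le> 16 * n"
  shows "log q (real (2 * ((2*q - 1) * pn n * (M3 q n + 1))))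
           \<le> log q (real n) + log q (log q (real n)) + log q (96 * real q * (2 * real q - 1))"
proof -
  define lg where "lg = log q (real n)"
  let ?K = "2 * ((2*q - 1) * pn n * (M3 q n + 1))"
  let ?c = "96 * real q * (2 * real q - 1)"
  have "0 < q ^ (2*q)" using q by simp
  hence n_pos: "0 < n" using n by linarith
  have lg_pos: "0 < lg" using log_ge_of_pow_le[OF q n] q unfolding lg_def by simp
  have "0 < ?K" using q prime_gt_0_nat[OF prime_pn[of n]] by simp
  hence K_pos: "0 < real ?K" by (simp only: of_nat_0_less_iff)
  have c_pos: "0 < ?c" using q by simp
  have "real (2*q - 1) = 2 * real q - 1" using q by (simp add: of_nat_diff)
  hence "real ?K = 2 * (2 * real q - 1) * real (pn n) * real (M3 q n + 1)"
    by (simp only: of_nat_mult of_nat_numeral mult.assoc)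
  also have "\<dots> \<le> 2 * (2 * real q - 1) * (16 * real n) * (3 * real q * lg)"
    using q pn run_bound_estimates(3)[OF q n] unfolding lg_def by (intro mult_mono) auto
  also have "\<dots> = ?c * (real n * lg)" by (simp add: algebra_simps)
  finally have le: "real ?K \<le> ?c * (real n * lg)" .
  hence "0 < ?c * (real n * lg)" using K_pos by linarith
  hence "log q (real ?K) \<le> log q (?c * (real n * lg))"
    using q by (intro log_le_cancel_iff[THEN iffD2] K_pos le) simp_all
  also have "\<dots> = log q ?c + log q (real n * lg)"
    using n_pos lg_pos by (intro log_mult_pos c_pos) simp_all
  also have "log q (real n * lg) = log q (real n) + log q lg"
    using n_pos lg_pos by (intro log_mult_pos) simp_all
  finally show ?thesis unfolding lg_def by (simp only: ac_simps)
qed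

lemma redundancy_CAux_le:
  fixes q n :: nat
  assumes q: "q \<ge> 2" and n: "q ^ (2*q) \<le> n" and pn: "pn n \<le> 16 * n"
  shows "\<exists>d1 d2 d3. d1 \<le> 2*q - 2 \<and> d2 \<le> pn n - 1 \<and> d3 \<le> M3 q n \<and>
           redundancy q n (CAux q n d1 d2 d3)
             \<le> log q (real n) + log q (log q (real n)) + log q (96 * real q * (2 * real q - 1))"
proof -
  let ?K = "(2*q - 1) * pn n * (M3 q n + 1)"
  obtain d1 d2 d3 where d: "d1 \<le> 2*q - 2" "d2 \<le> pn n - 1" "d3 \<le> M3 q n"
    and C: "card (ALLs q n ((Pq q n - 1) div 3)) \<le> card (CAux q n d1 d2 d3) * ?K"
    using exists_large_CAux[of q n] q by auto
  have "q ^ n \<le> 2 * (card (CAux q n d1 d2 d3) * ?K)"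
    using card_ALLs_run_bound_ge[OF q n] C by linarith
  also have "\<dots> = (2 * ?K) * card (CAux q n d1 d2 d3)" by (simp only: ac_simps)
  finally have "real q ^ n \<le> real (2 * ?K) * real (card (CAux q n d1 d2 d3))"
    by (metis of_nat_le_iff of_nat_mult of_nat_power)
  hence "redundancy q n (CAux q n d1 d2 d3) \<le> log q (real (2 * ?K))" by (rule redundancy_le_log[OF q])
  also have "\<dots> \<le> log q (real n) + log q (log q (real n)) + log q (96 * real q * (2 * real q - 1))"
    by (rule log_residue_count_le[OF q n pn])
  finally show ?thesis using d by blast
qed

lemma CAux_redundancy_bound:
  assumes "q \<ge> 2"
  shows "\<exists>K::real. \<exists>N. \<forall>n\<ge>N. \<exists>d1 d2 d3. d1 \<le> 2 * q - 2 \<and> d2 \<le> pn n - 1 \<and> d3 \<le> M3 q n \<and>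
           redundancy q n (CAux q n d1 d2 d3) \<le> log q (real n) + log q (log q (real n)) + K"
proof -
  obtain N where N: "\<And>n. n \<ge> N \<Longrightarrow> pn n \<le> 16 * n"
    using eventually_pn_le unfolding eventually_sequentially by blast
  show ?thesis
    using redundancy_CAux_le[OF assms] N
    by (intro exI[of _ "log q (96 * real q * (2 * real q - 1))"] exI[of _ "max N (q ^ (2*q))"]) auto
qed

theorem theorem13:
  fixes q :: nat
  assumes "q \<ge> 2"
  shows "(\<forall>n d1 d2 d3 x y. n \<ge> 1 \<longrightarrow> d1 \<le> 2 * q - 2 \<longrightarrow> d2 \<le> pn n - 1 \<longrightarrow> d3 \<le> M3 q n \<longrightarrow>
            x \<in> CAux q n d1 d2 d3 \<longrightarrow> y \<in> CAux q n d1 d2 d3 \<longrightarrow> x \<noteq> y \<longrightarrow>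
            hamming (Rvec x) (Rvec y) = 4 \<longrightarrow>
            \<not> (\<exists>u v w t1 t2 a1 b1 a2 b2.
                  u \<in> seqs q \<and> v \<in> seqs q \<and> w \<in> seqs q \<and> v \<noteq> [] \<and>
                  t1 \<ge> 1 \<and> t2 \<ge> 1 \<and> a1 < q \<and> b1 < q \<and> a2 < q \<and> b2 < q \<and>
                  a1 \<noteq> b1 \<and> a2 \<noteq> b2 \<and>
                  x = u @ alt t1 a1 b1 @ v @ alt t2 a2 b2 @ w \<and>
                  y = u @ alt t1 b1 a1 @ v @ alt t2 b2 a2 @ w))
         \<and> (\<exists>K::real. \<exists>N. \<forall>n\<ge>N. \<exists>d1 d2 d3. d1 \<le> 2 * q - 2 \<and> d2 \<le> pn n - 1 \<and> d3 \<le> M3 q n \<and>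
               redundancy q n (CAux q n d1 d2 d3)
                 \<le> log q (real n) + log q (log q (real n)) + K)"
  \<comment> \<open>The first part needs none of the hypotheses on n, d1, d2, d3, x \<noteq> y and the Hamming distance.\<close>
  using no_two_alt_swaps_in_CAux CAux_redundancy_bound[OF assms] by blast

end
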